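(* For all $n\ge1$, $\mathbf{cf}_{n,1}(p,q)|_{p^0}=q^{\binom{n}{2}}$. Moreover, $$\mathbf{cf}_{n,1}(p,q)|_{p^1}=\begin{cases}0 & n=1,2,3,\\ \binom{n-2}{2}q^{\binom{n}{2}-2} & n\ge4,\end{cases}$$ $$\mathbf{cf}_{n,1}(p,q)|_{p^2}=\begin{cases}0 & n=1,2,3,4,\\ \left(3\binom{n-1}{4}-\binom{n-3}{2}\right)q^{\binom{n}{2}-4} & n\ge5,\end{cases}$$ $$\mathbf{cf}_{n,1}(p,q)|_{p^3}=\begin{cases}0 & n=1,2,3,4,5,\\ \left(15\binom{n}{6}-6\binom{n-2}{4}+\binom{n-4}{4}\right)q^{\binom{n}{2}-6} & n\ge5.\end{cases}$$
   Context: $F_1(p,q)=q$, $F_2(p,q)=q^2$ and $F_m(p,q)=qF_{m-1}(p,q)+pF_{m-2}(p,q)$ for $m\ge3$. Let $(x)_{\uparrow_{F,p,q,0}}=1$ and $(x)_{\uparrow_{F,p,q,k}}=x(x+F_1(p,q))\cdots(x+F_{k-1}(p,q))$ for $k\ge1$. Define the polynomials $\mathbf{cf}_{n,k}(p,q)$ for $0\le k\le n$ by $(x)_{\uparrow_{F,p,q,n}}=\sum_{k=0}^n\mathbf{cf}_{n,k}(p,q)x^k$. For a polynomial $f$ in $p$ with coefficients in $\mathbb{Q}[q]$, $f|_{p^s}$ denotes the coefficient of $p^s$. *)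

theory Defs
  imports "HOL-Computational_Algebra.Polynomial"
begin

text \<open>Bivariate polynomials in p, q with rational coefficients are represented as
  polynomials in p whose coefficients are polynomials in q: type rat poly poly.\<close>

definition qv :: "rat poly poly" where "qv = [:[:0, 1:]:]"
definition pv :: "rat poly poly" where "pv = [:0, 1:]"

fun Fpq :: "nat \<Rightarrow> rat poly poly" where
  "Fpq 0 = 0"
| "Fpq (Suc 0) = qv"
| "Fpq (Suc (Suc 0)) = qv ^ 2"
| "Fpq (Suc (Suc (Suc m))) = qv * Fpq (Suc (Suc m)) + pv * Fpq (Suc m)"

definition rising_F :: "nat \<Rightarrow> rat poly poly poly" where
  "rising_F n = (if n = 0 then 1 else [:0, 1:] * (\<Prod>i\<in>{1..<n}. [:Fpq i, 1:]))"

definition cf :: "nat \<Rightarrow> nat \<Rightarrow> rat poly poly" where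
  "cf n k = coeff (rising_F n) k"

end

theory Submission
  imports Defs
begin

text \<open>The coefficient of \<open>x\<close> in \<open>x (x + F 1) \<cdots> (x + F (n - 1))\<close> is the product
  \<open>F 1 \<cdots> F (n - 1)\<close>. Giving \<open>p\<close> weight 2 and \<open>q\<close> weight 1, every \<open>F m\<close> is homogeneous of
  weight \<open>m\<close>, namely \<open>F m = \<Sum>j. C(m - 1 - j, j) p^j q^(m - 2j)\<close>; hence the coefficient of \<open>p^s\<close>
  in the product is an integer multiple of \<open>q^(C(n, 2) - 2s)\<close>. These integers obey a convolution
  recursion in the number of factors, and for \<open>s \<le> 3\<close> their closed forms follow by induction,
  each step being a polynomial identity checked over \<open>\<rat>\<close>.\<close>

lemma monom_mult_cancel:
  fixes c :: "'a::idom poly"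
  assumes "monom 1 a * c = monom r e"
  shows "c = monom r (e - a)"
proof (cases "a \<le> e")
  case True
  then have "monom 1 a * c = monom 1 a * monom r (e - a)"
    using assms by (simp add: mult_monom)
  then show ?thesis by simp
next
  case False
  have "r = coeff (monom 1 a * c) e" using assms by simp
  then have "r = 0" using False by (simp add: coeff_monom_mult)
  then show ?thesis using assms by simp
qed

definition fib_coeff :: "nat \<Rightarrow> nat \<Rightarrow> nat" where
  "fib_coeff m j = (m - 1 - j) choose j"

lemma fib_coeff_Suc:
  "fib_coeff (Suc (Suc (Suc m))) (Suc j) = fib_coeff (Suc (Suc m)) (Suc j) + fib_coeff (Suc m) j"
proof (cases "j \<le> m")
  case True
  then have "Suc m - j = Suc (m - j)" by simp
  then show ?thesis by (simp add: fib_coeff_def)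
next
  case False
  then show ?thesis by (simp add: fib_coeff_def)
qed

lemma coeff_Fpq_Suc:
  "coeff (Fpq (Suc (Suc (Suc m)))) j
     = [:0, 1:] * coeff (Fpq (Suc (Suc m))) j + (case j of 0 \<Rightarrow> 0 | Suc i \<Rightarrow> coeff (Fpq (Suc m)) i)"
  by (simp add: qv_def pv_def coeff_pCons split: nat.split)

lemma pCons_0_1_eq_monom: "[:0, 1:] = monom 1 1"
  by (simp add: monom_Suc monom_0)

text \<open>Multiplying by \<open>q^(2j)\<close> rather than dividing keeps the exponents free of truncated
  subtraction; the form with \<open>q^(m - 2j)\<close> is recovered by \<open>monom_mult_cancel\<close>.\<close>

lemma coeff_Fpq:
  assumes "m \<ge> 1"
  shows "monom 1 (2 * j) * coeff (Fpq m) j = monom (of_nat (fib_coeff m j)) m"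
  using assms
proof (induction m arbitrary: j rule: Fpq.induct)
  case 1
  then show ?case by simp
next
  case 2
  then show ?case by (cases j) (auto simp: qv_def fib_coeff_def monom_altdef)
next
  case 3
  then show ?case by (cases j) (auto simp: qv_def fib_coeff_def monom_altdef power2_eq_square)
next
  case (4 m)
  show ?case
  proof (cases j)
    case 0
    then show ?thesis using "4.IH"(1)[of 0]
      unfolding coeff_Fpq_Suc by (simp add: fib_coeff_def pCons_0_1_eq_monom mult_monom)
  next
    case (Suc i)
    have "monom 1 (2 * j) * coeff (Fpq (Suc (Suc (Suc m)))) j
        = monom 1 1 * (monom 1 (2 * Suc i) * coeff (Fpq (Suc (Suc m))) (Suc i))
          + monom 1 2 * (monom 1 (2 * i) * coeff (Fpq (Suc m)) i)"
      unfolding coeff_Fpq_Suc Suc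
      by (simp add: distrib_left mult.assoc mult_monom pCons_0_1_eq_monom)
    also have "\<dots> = monom 1 1 * monom (of_nat (fib_coeff (Suc (Suc m)) (Suc i))) (Suc (Suc m))
          + monom 1 2 * monom (of_nat (fib_coeff (Suc m) i)) (Suc m)"
      using "4.IH"(1)[of "Suc i"] "4.IH"(2)[of i] by simp
    also have "\<dots> = monom (of_nat (fib_coeff (Suc (Suc (Suc m))) j)) (Suc (Suc (Suc m)))"
      by (simp add: Suc fib_coeff_Suc mult_monom add_monom)
    finally show ?thesis .
  qed
qed

primrec fib_prod_coeff :: "nat \<Rightarrow> nat \<Rightarrow> nat" where
  "fib_prod_coeff 0 s = (if s = 0 then 1 else 0)"
| "fib_prod_coeff (Suc k) s = (\<Sum>t\<le>s. fib_prod_coeff k t * fib_coeff (Suc k) (s - t))"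

lemma coeff_prod_Fpq:
  "monom 1 (2 * s) * coeff (\<Prod>i\<in>{1..k}. Fpq i) s
     = monom (of_nat (fib_prod_coeff k s)) (Suc k choose 2)"
proof (induction k arbitrary: s)
  case 0
  then show ?case by (simp add: monom_0 binomial_eq_0)
next
  case (Suc k)
  have prod_Suc: "(\<Prod>i\<in>{1..Suc k}. Fpq i) = (\<Prod>i\<in>{1..k}. Fpq i) * Fpq (Suc k)"
    by simp
  have "monom 1 (2 * s) * coeff (\<Prod>i\<in>{1..Suc k}. Fpq i) s
      = (\<Sum>t\<le>s. (monom 1 (2 * t) * coeff (\<Prod>i\<in>{1..k}. Fpq i) t)
                 * (monom 1 (2 * (s - t)) * coeff (Fpq (Suc k)) (s - t)))"
    unfolding prod_Suc coeff_mult sum_distrib_left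
  proof (rule sum.cong)
    fix t assume "t \<in> {..s}"
    then have "2 * s = 2 * t + 2 * (s - t)" by simp
    then have "monom 1 (2 * s) = monom 1 (2 * t) * (monom 1 (2 * (s - t)) :: rat poly)"
      by (simp add: mult_monom)
    then show "monom 1 (2 * s) * (coeff (\<Prod>i\<in>{1..k}. Fpq i) t * coeff (Fpq (Suc k)) (s - t))
        = (monom 1 (2 * t) * coeff (\<Prod>i\<in>{1..k}. Fpq i) t)
          * (monom 1 (2 * (s - t)) * coeff (Fpq (Suc k)) (s - t))"
      by (simp add: ac_simps)
  qed simp
  also have "\<dots> = (\<Sum>t\<le>s. monom (of_nat (fib_prod_coeff k t)) (Suc k choose 2)
                       * monom (of_nat (fib_coeff (Suc k) (s - t))) (Suc k))"
    by (simp only: Suc.IH coeff_Fpq[of "Suc k", simplified])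
  also have "\<dots> = (\<Sum>t\<le>s. monom (of_nat (fib_prod_coeff k t * fib_coeff (Suc k) (s - t)))
                                (Suc (Suc k) choose 2))"
    by (simp add: mult_monom numeral_2_eq_2 ac_simps)
  also have "\<dots> = monom (of_nat (fib_prod_coeff (Suc k) s)) (Suc (Suc k) choose 2)"
    by (simp add: monom_sum)
  finally show ?case .
qed

lemma fib_prod_coeff_0: "fib_prod_coeff k 0 = 1"
  by (induction k) (simp_all add: fib_coeff_def)

lemma fib_prod_coeff_1: "fib_prod_coeff k 1 = (k - 1) choose 2"
proof (induction k)
  case 0
  then show ?case by simp
next
  case (Suc k)
  then show ?case by (cases k) (simp_all add: fib_prod_coeff_0 fib_coeff_def numeral_2_eq_2)
qed

lemma fib_prod_coeff_Suc_2:
  "fib_prod_coeff (Suc k) 2 = fib_prod_coeff k 2 + (k - 1) * ((k - 1) choose 2) + ((k - 2) choose 2)"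
  using fib_prod_coeff_1[of k] by (simp add: atMost_nat_numeral fib_coeff_def fib_prod_coeff_0)

lemma fib_prod_coeff_Suc_3:
  "fib_prod_coeff (Suc k) 3 = fib_prod_coeff k 3 + (k - 1) * fib_prod_coeff k 2
     + ((k - 1) choose 2) * ((k - 2) choose 2) + ((k - 3) choose 3)"
  using fib_prod_coeff_1[of k] by (simp add: atMost_nat_numeral fib_coeff_def fib_prod_coeff_0)

lemmas of_nat_choose_expand =
  binomial_gbinomial gbinomial_prod_rev atLeast0LessThan lessThan_nat_numeral fact_numeral

lemma fib_prod_coeff_2: "int (fib_prod_coeff k 2) = 3 * int (k choose 4) - int ((k - 2) choose 2)"
proof (cases "k < 2")
  case True
  then show ?thesis by (auto simp: eval_nat_numeral less_Suc_eq atMost_Suc fib_coeff_def)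
next
  case False
  then have "k \<ge> 2" by simp
  then show ?thesis
  proof (induction k rule: nat_induct_at_least)
    case base
    then show ?case by (simp add: eval_nat_numeral atMost_Suc fib_coeff_def)
  next
    case (Suc k)
    then obtain m where m: "k = m + 2" by (metis add.commute le_Suc_ex)
    have IH: "rat_of_nat (fib_prod_coeff k 2) = 3 * of_nat (k choose 4) - of_nat ((k - 2) choose 2)"
      using arg_cong[OF Suc.IH, of rat_of_int] by simp
    have "rat_of_nat (fib_prod_coeff (Suc k) 2)
        = of_nat (fib_prod_coeff k 2) + of_nat (k - 1) * of_nat ((k - 1) choose 2) + of_nat ((k - 2) choose 2)"
      unfolding fib_prod_coeff_Suc_2 by simp
    also have "\<dots> = 3 * of_nat (Suc k choose 4) - of_nat ((Suc k - 2) choose 2)"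
      unfolding IH unfolding m by (simp add: of_nat_choose_expand field_simps)
    finally show ?case
      by (intro of_int_eq_iff[where 'a = rat, THEN iffD1]) simp
  qed
qed

lemma fib_prod_coeff_3:
  "int (fib_prod_coeff k 3) = 15 * int (Suc k choose 6) - 6 * int ((k - 1) choose 4) + int ((k - 3) choose 4)"
proof (cases "k < 3")
  case True
  then show ?thesis by (auto simp: eval_nat_numeral less_Suc_eq atMost_Suc fib_coeff_def)
next
  case False
  then have "k \<ge> 3" by simp
  then show ?thesis
  proof (induction k rule: nat_induct_at_least)
    case base
    then show ?case by (simp add: eval_nat_numeral atMost_Suc fib_coeff_def)
  next
    case (Suc k)
    then obtain m where m: "k = m + 3" by (metis add.commute le_Suc_ex)
    have b2: "rat_of_nat (fib_prod_coeff k 2) = 3 * of_nat (k choose 4) - of_nat ((k - 2) choose 2)"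
      using arg_cong[OF fib_prod_coeff_2, of rat_of_int] by simp
    have IH: "rat_of_nat (fib_prod_coeff k 3)
        = 15 * of_nat (Suc k choose 6) - 6 * of_nat ((k - 1) choose 4) + of_nat ((k - 3) choose 4)"
      using arg_cong[OF Suc.IH, of rat_of_int] by simp
    have "rat_of_nat (fib_prod_coeff (Suc k) 3)
        = of_nat (fib_prod_coeff k 3) + of_nat (k - 1) * of_nat (fib_prod_coeff k 2)
          + of_nat ((k - 1) choose 2) * of_nat ((k - 2) choose 2) + of_nat ((k - 3) choose 3)"
      unfolding fib_prod_coeff_Suc_3 by simp
    also have "\<dots> = 15 * of_nat (Suc (Suc k) choose 6) - 6 * of_nat ((Suc k - 1) choose 4)
                      + of_nat ((Suc k - 3) choose 4)"
      unfolding IH b2 unfolding m by (simp add: of_nat_choose_expand field_simps)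
    finally show ?case
      by (intro of_int_eq_iff[where 'a = rat, THEN iffD1]) simp
  qed
qed

lemma cf_Suc_1: "cf (Suc k) 1 = (\<Prod>i\<in>{1..k}. Fpq i)"
  by (simp add: cf_def rising_F_def coeff_pCons poly_0_coeff_0[symmetric] poly_prod
      atLeastLessThanSuc_atLeastAtMost)

lemma coeff_cf_1:
  "coeff (cf (Suc k) 1) s = of_nat (fib_prod_coeff k s) * [:0, 1:] ^ ((Suc k choose 2) - 2 * s)"
  unfolding cf_Suc_1 using monom_mult_cancel[OF coeff_prod_Fpq[of s k]]
  by (simp add: monom_altdef of_nat_poly)

theorem theorem14:
  fixes n :: nat
  assumes "n \<ge> 1"
  shows "coeff (cf n 1) 0 = [:0, 1:] ^ (n choose 2)
    \<and> (n \<le> 3 \<longrightarrow> coeff (cf n 1) 1 = 0)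
    \<and> (n \<ge> 4 \<longrightarrow> coeff (cf n 1) 1
           = of_nat ((n - 2) choose 2) * [:0, 1:] ^ ((n choose 2) - 2))
    \<and> (n \<le> 4 \<longrightarrow> coeff (cf n 1) 2 = 0)
    \<and> (n \<ge> 5 \<longrightarrow> coeff (cf n 1) 2
           = (3 * of_nat ((n - 1) choose 4) - of_nat ((n - 3) choose 2)) * [:0, 1:] ^ ((n choose 2) - 4))
    \<and> (n \<le> 5 \<longrightarrow> coeff (cf n 1) 3 = 0)
    \<and> (n \<ge> 5 \<longrightarrow> coeff (cf n 1) 3
           = (15 * of_nat (n choose 6) - 6 * of_nat ((n - 2) choose 4) + of_nat ((n - 4) choose 4))
             * [:0, 1:] ^ ((n choose 2) - 6))"
proof -
  obtain k where n: "n = Suc k" using assms by (cases n) auto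
  have closed_2: "(of_nat (fib_prod_coeff k 2) :: rat poly)
      = 3 * of_nat (k choose 4) - of_nat ((k - 2) choose 2)"
    using arg_cong[OF fib_prod_coeff_2, of "of_int :: int \<Rightarrow> rat poly"] by simp
  have closed_3: "(of_nat (fib_prod_coeff k 3) :: rat poly)
      = 15 * of_nat (Suc k choose 6) - 6 * of_nat ((k - 1) choose 4) + of_nat ((k - 3) choose 4)"
    using arg_cong[OF fib_prod_coeff_3, of "of_int :: int \<Rightarrow> rat poly"] by simp
  show ?thesis
    unfolding n coeff_cf_1 fib_prod_coeff_0 fib_prod_coeff_1 closed_2 closed_3
    by (simp add: binomial_eq_0)
qed
end
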